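(* For $i=1,2$ let $1\to K_i\xrightarrow{\iota_i}A_i\xrightarrow{\pi_i}H_i\to1$ be exact sequences of Hopf algebras such that $\iota_i(K_i)=\mathcal{HZ}(A_i)$. Suppose $\omega:A_1\to A_2$ is a Hopf algebra isomorphism. Then there exist Hopf algebra isomorphisms $\underline\omega:K_1\to K_2$ and $\overline\omega:H_1\to H_2$ such that $\iota_2\underline\omega=\omega\iota_1$ and $\pi_2\omega=\overline\omega\pi_1$.
   Context: Hopf algebras over a field $k$, with bijective antipode. A sequence $1\to B\xrightarrow{\iota}A\xrightarrow{\pi}H\to1$ of Hopf algebra maps is exact if $\iota$ is injective, $\pi$ surjective, $\operatorname{Ker}\pi=AB^+$ ($B^+=\operatorname{Ker}\varepsilon$) and $B={}^{\mathrm{co}\,\pi}A=\{a:(\pi\otimes\mathrm{id})\Delta(a)=1\otimes a\}$. The Hopf center $\mathcal{HZ}(A)$ is the maximal central Hopf subalgebra of $A$. *)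

theory Defs
  imports Complex_Main
begin

record ('k, 'a) hopf_str =
  scl  :: "'k \<Rightarrow> 'a \<Rightarrow> 'a"
  cmul :: "'a \<Rightarrow> ('a \<times> 'a) list"
  cnt  :: "'a \<Rightarrow> 'k"
  ant  :: "'a \<Rightarrow> 'a"

text \<open>An element of V \<otimes> W is a finite sum
of pure tensors, written as a list of pairs [(v1,w1),...,(vn,wn)] meaning
v1 \<otimes> w1 + ... + vn \<otimes> wn.  Two such formal sums represent the same element of
V \<otimes> W iff every pair of linear functionals f on V and g on W takes the same value
on them (f \<otimes> g); over a field this is exactly equality in the tensor product.\<close>

definition lin_fun :: "('k::field \<Rightarrow> 'v::ab_group_add \<Rightarrow> 'v) \<Rightarrow> ('v \<Rightarrow> 'k) \<Rightarrow> bool" where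
  "lin_fun s f \<longleftrightarrow> Vector_Spaces.linear s ((*)) f"

definition tensor_eq ::
  "('k::field \<Rightarrow> 'v::ab_group_add \<Rightarrow> 'v) \<Rightarrow> ('k \<Rightarrow> 'w::ab_group_add \<Rightarrow> 'w)
    \<Rightarrow> ('v \<times> 'w) list \<Rightarrow> ('v \<times> 'w) list \<Rightarrow> bool" where
  "tensor_eq s t xs ys \<longleftrightarrow>
     (\<forall>f g. lin_fun s f \<and> lin_fun t g \<longrightarrow>
        (\<Sum>(v, w)\<leftarrow>xs. f v * g w) = (\<Sum>(v, w)\<leftarrow>ys. f v * g w))"

definition tensor3_eq ::
  "('k::field \<Rightarrow> 'u::ab_group_add \<Rightarrow> 'u) \<Rightarrow> ('k \<Rightarrow> 'v::ab_group_add \<Rightarrow> 'v)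
    \<Rightarrow> ('k \<Rightarrow> 'w::ab_group_add \<Rightarrow> 'w)
    \<Rightarrow> ('u \<times> 'v \<times> 'w) list \<Rightarrow> ('u \<times> 'v \<times> 'w) list \<Rightarrow> bool" where
  "tensor3_eq r s t xs ys \<longleftrightarrow>
     (\<forall>f g h. lin_fun r f \<and> lin_fun s g \<and> lin_fun t h \<longrightarrow>
        (\<Sum>(u, v, w)\<leftarrow>xs. f u * g v * h w) = (\<Sum>(u, v, w)\<leftarrow>ys. f u * g v * h w))"

text \<open>Hopf algebra axioms (with bijective antipode, the standing assumption).\<close>

definition hopf_algebra :: "('k::field, 'a::ring_1) hopf_str \<Rightarrow> bool" where
  "hopf_algebra A \<longleftrightarrow>
    (let s = scl A; \<Delta> = cmul A; \<epsilon> = cnt A; S = ant A in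
     \<comment> \<open>k-algebra\<close>
     vector_space s \<and>
     (\<forall>c x y. s c (x * y) = s c x * y \<and> s c (x * y) = x * s c y) \<and>
     \<comment> \<open>comultiplication: linear, multiplicative, unital, coassociative\<close>
     (\<forall>x y. tensor_eq s s (\<Delta> (x + y)) (\<Delta> x @ \<Delta> y)) \<and>
     (\<forall>c x. tensor_eq s s (\<Delta> (s c x)) (map (\<lambda>(a, b). (s c a, b)) (\<Delta> x))) \<and>
     (\<forall>x y. tensor_eq s s (\<Delta> (x * y))
              (concat (map (\<lambda>(a, b). map (\<lambda>(a', b'). (a * a', b * b')) (\<Delta> y)) (\<Delta> x)))) \<and>
     tensor_eq s s (\<Delta> 1) [(1, 1)] \<and>
     (\<forall>x. tensor3_eq s s s
            (concat (map (\<lambda>(a, b). map (\<lambda>(a1, a2). (a1, a2, b)) (\<Delta> a)) (\<Delta> x)))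
            (concat (map (\<lambda>(a, b). map (\<lambda>(b1, b2). (a, b1, b2)) (\<Delta> b)) (\<Delta> x)))) \<and>
     \<comment> \<open>counit: algebra map, counit axioms\<close>
     lin_fun s \<epsilon> \<and> (\<forall>x y. \<epsilon> (x * y) = \<epsilon> x * \<epsilon> y) \<and> \<epsilon> 1 = 1 \<and>
     (\<forall>x. (\<Sum>(a, b)\<leftarrow>\<Delta> x. s (\<epsilon> a) b) = x) \<and>
     (\<forall>x. (\<Sum>(a, b)\<leftarrow>\<Delta> x. s (\<epsilon> b) a) = x) \<and>
     \<comment> \<open>antipode: linear, antipode axioms, bijective\<close>
     Vector_Spaces.linear s s S \<and>
     (\<forall>x. (\<Sum>(a, b)\<leftarrow>\<Delta> x. S a * b) = s (\<epsilon> x) 1) \<and>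
     (\<forall>x. (\<Sum>(a, b)\<leftarrow>\<Delta> x. a * S b) = s (\<epsilon> x) 1) \<and>
     bij S)"

text \<open>Hopf algebra maps (= bialgebra maps; they automatically commute with antipodes)
and isomorphisms.\<close>

definition hopf_map ::
  "('k::field, 'a::ring_1) hopf_str \<Rightarrow> ('k, 'b::ring_1) hopf_str \<Rightarrow> ('a \<Rightarrow> 'b) \<Rightarrow> bool" where
  "hopf_map A B f \<longleftrightarrow>
     Vector_Spaces.linear (scl A) (scl B) f \<and>
     (\<forall>x y. f (x * y) = f x * f y) \<and> f 1 = 1 \<and>
     (\<forall>x. tensor_eq (scl B) (scl B) (cmul B (f x)) (map (\<lambda>(a, b). (f a, f b)) (cmul A x))) \<and>
     (\<forall>x. cnt B (f x) = cnt A x)"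

definition hopf_iso ::
  "('k::field, 'a::ring_1) hopf_str \<Rightarrow> ('k, 'b::ring_1) hopf_str \<Rightarrow> ('a \<Rightarrow> 'b) \<Rightarrow> bool" where
  "hopf_iso A B f \<longleftrightarrow> hopf_map A B f \<and> bij f"

definition hopf_subalgebra :: "('k::field, 'a::ring_1) hopf_str \<Rightarrow> 'a set \<Rightarrow> bool" where
  "hopf_subalgebra A B \<longleftrightarrow>
     0 \<in> B \<and> (\<forall>x\<in>B. \<forall>y\<in>B. x + y \<in> B) \<and> (\<forall>c. \<forall>x\<in>B. scl A c x \<in> B) \<and>
     1 \<in> B \<and> (\<forall>x\<in>B. \<forall>y\<in>B. x * y \<in> B) \<and>
     (\<forall>x\<in>B. \<exists>xs. set xs \<subseteq> B \<times> B \<and> tensor_eq (scl A) (scl A) (cmul A x) xs) \<and>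
     (\<forall>x\<in>B. ant A x \<in> B)"

definition central_hopf_subalgebra :: "('k::field, 'a::ring_1) hopf_str \<Rightarrow> 'a set \<Rightarrow> bool" where
  "central_hopf_subalgebra A B \<longleftrightarrow> hopf_subalgebra A B \<and> (\<forall>b\<in>B. \<forall>a. a * b = b * a)"

definition is_hopf_center :: "('k::field, 'a::ring_1) hopf_str \<Rightarrow> 'a set \<Rightarrow> bool" where
  "is_hopf_center A Z \<longleftrightarrow>
     central_hopf_subalgebra A Z \<and> (\<forall>B. central_hopf_subalgebra A B \<longrightarrow> B \<subseteq> Z)"

definition aug_ideal :: "('k::field, 'a::ring_1) hopf_str \<Rightarrow> 'a set \<Rightarrow> 'a set" where
  "aug_ideal A B = {(\<Sum>(a, b)\<leftarrow>xs. a * b) | xs. \<forall>(a, b)\<in>set xs. b \<in> B \<and> cnt A b = 0}"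

definition coinvariants ::
  "('k::field, 'a::ring_1) hopf_str \<Rightarrow> ('k, 'h::ring_1) hopf_str \<Rightarrow> ('a \<Rightarrow> 'h) \<Rightarrow> 'a set" where
  "coinvariants A H \<pi> =
     {a. tensor_eq (scl H) (scl A) (map (\<lambda>(x, y). (\<pi> x, y)) (cmul A a)) [(1, a)]}"

definition hopf_exact ::
  "('k::field, 'b::ring_1) hopf_str \<Rightarrow> ('k, 'a::ring_1) hopf_str \<Rightarrow> ('k, 'h::ring_1) hopf_str
    \<Rightarrow> ('b \<Rightarrow> 'a) \<Rightarrow> ('a \<Rightarrow> 'h) \<Rightarrow> bool" where
  "hopf_exact K A H \<iota> \<pi> \<longleftrightarrow>
     hopf_algebra K \<and> hopf_algebra A \<and> hopf_algebra H \<and>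
     hopf_map K A \<iota> \<and> hopf_map A H \<pi> \<and>
     inj \<iota> \<and> surj \<pi> \<and>
     {a. \<pi> a = 0} = aug_ideal A (range \<iota>) \<and>
     range \<iota> = coinvariants A H \<pi>"

end

theory Submission
  imports Defs
begin

(* A Hopf isomorphism \<omega> carries central Hopf subalgebras to central Hopf subalgebras: the algebra
   and coalgebra structure and centrality are transported directly, and closure under the antipode
   holds because Hopf maps commute with antipodes (S \<circ> \<omega> and \<omega> \<circ> S are both convolution
   inverses of \<omega>). Hence \<omega> maps the Hopf centre \<iota>1(K1) onto \<iota>2(K2) and restricts to an
   isomorphism K1 \<rightarrow> K2. As Ker \<pi>i = Ai \<iota>i(Ki)^+, \<omega> maps Ker \<pi>1 into Ker \<pi>2 and descends to
   a Hopf map H1 \<rightarrow> H2. The same construction for the inverse of \<omega> yields the inverse maps. *)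

section \<open>Coordinates and tensor equality\<close>

lemma
  assumes "Vector_Spaces.linear s t f"
  shows linear_map_zero: "f 0 = 0"
    and linear_map_add: "f (x + y) = f x + f y"
    and linear_map_diff: "f (x - y) = f x - f y"
    and linear_map_scale: "f (s c x) = t c (f x)"
    and linear_map_sum: "f (sum g F) = (\<Sum>a\<in>F. f (g a))"
    and linear_map_sum_list: "f (\<Sum>(a, b)\<leftarrow>ps. k a b) = (\<Sum>(a, b)\<leftarrow>ps. f (k a b))"
proof -
  interpret module_hom s t f using assms by (simp add: module_hom_iff_linear)
  show "f 0 = 0" "f (x + y) = f x + f y" "f (x - y) = f x - f y" "f (s c x) = t c (f x)"
    "f (sum g F) = (\<Sum>a\<in>F. f (g a))"
    by (simp_all add: add diff scale sum)
  show "f (\<Sum>(a, b)\<leftarrow>ps. k a b) = (\<Sum>(a, b)\<leftarrow>ps. f (k a b))"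
    by (induct ps) (auto simp: add)
qed

lemma linearI:
  assumes "vector_space s" "vector_space t"
    and "\<And>x y. f (x + y) = f x + f y" "\<And>c x. f (s c x) = t c (f x)"
  shows "Vector_Spaces.linear s t f"
  unfolding Vector_Spaces.linear_iff using assms by blast

lemma linear_vector_spaceD:
  assumes "Vector_Spaces.linear s t f"
  shows "vector_space s" "vector_space t"
  using assms unfolding Vector_Spaces.linear_iff by auto

lemma linear_comp_apply:
  "Vector_Spaces.linear s1 s2 f \<Longrightarrow> Vector_Spaces.linear s2 s3 g \<Longrightarrow>
    Vector_Spaces.linear s1 s3 (\<lambda>x. g (f x))"
  using Vector_Spaces.linear_compose[of s1 s2 f s3 g] unfolding comp_def .

lemma lin_fun_comp:
  "Vector_Spaces.linear s t f \<Longrightarrow> lin_fun t g \<Longrightarrow> lin_fun s (\<lambda>x. g (f x))"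
  unfolding lin_fun_def by (rule linear_comp_apply)

lemma lin_fun_mult_const:
  assumes "lin_fun s f"
  shows "lin_fun s (\<lambda>x. f x * c)"
  using assms unfolding lin_fun_def Vector_Spaces.linear_iff by (simp add: distrib_right)

lemma sum_list_sum_commute:
  "(\<Sum>z\<leftarrow>zs. \<Sum>b\<in>F. h z b) = (\<Sum>b\<in>F. \<Sum>z\<leftarrow>zs. h z b)"
  by (induct zs) (simp_all add: sum.distrib)

text \<open>\<open>R v b\<close> is the coefficient of \<open>v\<close> at the vector \<open>b\<close> of some basis, which stays implicit.\<close>

definition coordinates ::
  "('k::field \<Rightarrow> 'v::ab_group_add \<Rightarrow> 'v) \<Rightarrow> ('v \<Rightarrow> 'v \<Rightarrow> 'k) \<Rightarrow> bool" where
  "coordinates s R \<longleftrightarrow> (\<forall>b. lin_fun s (\<lambda>v. R v b)) \<and>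
     (\<forall>v. finite {b. R v b \<noteq> 0} \<and> (\<Sum>b | R v b \<noteq> 0. s (R v b) b) = v)"

lemma coordinates_exist:
  assumes "vector_space s"
  shows "\<exists>R. coordinates s R"
proof -
  interpret vector_space s by fact
  define B where "B = extend_basis {}"
  have "independent B" "span B = UNIV"
    unfolding B_def by (simp_all add: independent_extend_basis[OF independent_empty]
        span_extend_basis[OF independent_empty])
  then have "coordinates s (representation B)"
    unfolding coordinates_def lin_fun_def
    by (simp add: linear_representation finite_representation sum_nonzero_representation_eq)
  then show ?thesis by blast
qed

lemma coordinates_expand:
  assumes R: "coordinates s R" and g: "lin_fun s g"
    and F: "finite F" "{b. R v b \<noteq> 0} \<subseteq> F"
  shows "g v = (\<Sum>b\<in>F. R v b * g b)"
proof -
  interpret vector_space s using g unfolding lin_fun_def by (rule linear_vector_spaceD)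
  have "v = (\<Sum>b | R v b \<noteq> 0. s (R v b) b)" using R unfolding coordinates_def by simp
  also have "\<dots> = (\<Sum>b\<in>F. s (R v b) b)"
    using F by (intro sum.mono_neutral_left) auto
  finally have "g v = g (\<Sum>b\<in>F. s (R v b) b)" by simp
  then show ?thesis using g unfolding lin_fun_def by (simp add: linear_map_sum linear_map_scale)
qed

lemma eq_if_lin_fun_eq:
  assumes "vector_space s" and eq: "\<And>f. lin_fun s f \<Longrightarrow> f x = f y"
  shows "x = y"
proof -
  obtain R where R: "coordinates s R" using coordinates_exist[OF assms(1)] ..
  have "R x = R y" using eq R unfolding coordinates_def by blast
  then show ?thesis using R unfolding coordinates_def by metis
qed

lemma sum_list_coordinate_expansion:
  assumes R: "coordinates t R" and \<phi>: "\<And>z. lin_fun t (\<phi> z)"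
    and F: "finite F" "\<And>z. z \<in> set zs \<Longrightarrow> {b. R (p z) b \<noteq> 0} \<subseteq> F"
  shows "(\<Sum>z\<leftarrow>zs. \<phi> z (p z)) = (\<Sum>b\<in>F. \<Sum>z\<leftarrow>zs. \<phi> z b * R (p z) b)"
proof -
  have "(\<Sum>z\<leftarrow>zs. \<phi> z (p z)) = (\<Sum>z\<leftarrow>zs. \<Sum>b\<in>F. \<phi> z b * R (p z) b)"
    using coordinates_expand[OF R \<phi> F(1) F(2)] by (intro arg_cong[where f=sum_list] map_cong)
      (auto simp: mult.commute)
  then show ?thesis by (simp add: sum_list_sum_commute)
qed

text \<open>Expanding the second argument in coordinates writes a bilinear functional as a finite sum of
  products of two functionals, which is exactly what \<open>tensor_eq\<close> compares.\<close>

lemma tensor_eq_bilinear_functional: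
  assumes t: "vector_space t" and eq: "tensor_eq s t xs ys"
    and \<phi>1: "\<And>w. lin_fun s (\<lambda>v. \<phi> v w)" and \<phi>2: "\<And>v. lin_fun t (\<phi> v)"
  shows "(\<Sum>(v, w)\<leftarrow>xs. \<phi> v w) = (\<Sum>(v, w)\<leftarrow>ys. \<phi> v w)"
proof -
  obtain R where R: "coordinates t R" using coordinates_exist[OF t] ..
  define F where "F = (\<Union>z\<in>set (xs @ ys). {b. R (snd z) b \<noteq> 0})"
  have "finite F" using R unfolding F_def coordinates_def by auto
  then have expand: "(\<Sum>z\<leftarrow>zs. \<phi> (fst z) (snd z)) = (\<Sum>b\<in>F. \<Sum>z\<leftarrow>zs. \<phi> (fst z) b * R (snd z) b)"
    if "set zs \<subseteq> set (xs @ ys)" for zs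
    using that by (intro sum_list_coordinate_expansion[OF R \<phi>2]) (auto simp: F_def)
  have "(\<Sum>z\<leftarrow>xs. \<phi> (fst z) (snd z)) = (\<Sum>z\<leftarrow>ys. \<phi> (fst z) (snd z))"
    unfolding expand[of xs, simplified] expand[of ys, simplified]
  proof (rule sum.cong[OF refl])
    fix b
    have "lin_fun t (\<lambda>w. R w b)" using R unfolding coordinates_def by blast
    with \<phi>1 show "(\<Sum>z\<leftarrow>xs. \<phi> (fst z) b * R (snd z) b) = (\<Sum>z\<leftarrow>ys. \<phi> (fst z) b * R (snd z) b)"
      using eq[unfolded tensor_eq_def, rule_format, of "\<lambda>v. \<phi> v b" "\<lambda>w. R w b"]
      by (simp add: case_prod_beta')
  qed
  then show ?thesis by (simp add: case_prod_beta')
qed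

lemma tensor3_eq_trilinear_functional:
  assumes s: "vector_space s" and t: "vector_space t" and eq: "tensor3_eq r s t xs ys"
    and \<phi>1: "\<And>v w. lin_fun r (\<lambda>u. \<phi> u v w)" and \<phi>2: "\<And>u w. lin_fun s (\<lambda>v. \<phi> u v w)"
    and \<phi>3: "\<And>u v. lin_fun t (\<phi> u v)"
  shows "(\<Sum>(u, v, w)\<leftarrow>xs. \<phi> u v w) = (\<Sum>(u, v, w)\<leftarrow>ys. \<phi> u v w)"
proof -
  obtain R where R: "coordinates s R" using coordinates_exist[OF s] ..
  obtain Q where Q: "coordinates t Q" using coordinates_exist[OF t] ..
  define F where "F = (\<Union>z\<in>set (xs @ ys). {b. R (fst (snd z)) b \<noteq> 0})"
  define G where "G = (\<Union>z\<in>set (xs @ ys). {c. Q (snd (snd z)) c \<noteq> 0})"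
  have F: "finite F" using R unfolding F_def coordinates_def by auto
  have G: "finite G" using Q unfolding G_def coordinates_def by auto
  have expand: "(\<Sum>z\<leftarrow>zs. \<phi> (fst z) (fst (snd z)) (snd (snd z))) =
      (\<Sum>c\<in>G. \<Sum>b\<in>F. \<Sum>z\<leftarrow>zs. \<phi> (fst z) b c * R (fst (snd z)) b * Q (snd (snd z)) c)"
    if zs: "set zs \<subseteq> set (xs @ ys)" for zs
  proof -
    have "(\<Sum>z\<leftarrow>zs. \<phi> (fst z) (fst (snd z)) (snd (snd z))) =
        (\<Sum>c\<in>G. \<Sum>z\<leftarrow>zs. \<phi> (fst z) (fst (snd z)) c * Q (snd (snd z)) c)"
      using zs by (intro sum_list_coordinate_expansion[OF Q \<phi>3 G]) (auto simp: G_def)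
    also have "\<dots> = (\<Sum>c\<in>G. \<Sum>b\<in>F. \<Sum>z\<leftarrow>zs. \<phi> (fst z) b c * Q (snd (snd z)) c * R (fst (snd z)) b)"
      using zs by (intro sum.cong refl sum_list_coordinate_expansion[OF R lin_fun_mult_const[OF \<phi>2] F])
        (auto simp: F_def)
    finally show ?thesis by (simp add: mult_ac)
  qed
  have "(\<Sum>z\<leftarrow>xs. \<phi> (fst z) (fst (snd z)) (snd (snd z))) =
      (\<Sum>z\<leftarrow>ys. \<phi> (fst z) (fst (snd z)) (snd (snd z)))"
    unfolding expand[of xs, simplified] expand[of ys, simplified]
  proof (intro sum.cong refl)
    fix b c
    have "lin_fun r (\<lambda>u. \<phi> u b c)" "lin_fun s (\<lambda>v. R v b)" "lin_fun t (\<lambda>w. Q w c)"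
      using \<phi>1 R Q unfolding coordinates_def by blast+
    then show "(\<Sum>z\<leftarrow>xs. \<phi> (fst z) b c * R (fst (snd z)) b * Q (snd (snd z)) c) =
        (\<Sum>z\<leftarrow>ys. \<phi> (fst z) b c * R (fst (snd z)) b * Q (snd (snd z)) c)"
      using eq[unfolded tensor3_eq_def, rule_format, of "\<lambda>u. \<phi> u b c" "\<lambda>v. R v b" "\<lambda>w. Q w c"]
      by (simp add: case_prod_beta')
  qed
  then show ?thesis by (simp add: case_prod_beta')
qed

lemma tensor_eq_bilinear:
  assumes t: "vector_space t" and eq: "tensor_eq s t xs ys"
    and \<beta>1: "\<And>w. Vector_Spaces.linear s r (\<lambda>v. \<beta> v w)"
    and \<beta>2: "\<And>v. Vector_Spaces.linear t r (\<beta> v)"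
  shows "(\<Sum>(v, w)\<leftarrow>xs. \<beta> v w) = (\<Sum>(v, w)\<leftarrow>ys. \<beta> v w)"
proof (rule eq_if_lin_fun_eq)
  show "vector_space r" using linear_vector_spaceD(2)[OF \<beta>2] .
  fix \<mu> assume \<mu>: "lin_fun r \<mu>"
  have "(\<Sum>(v, w)\<leftarrow>xs. \<mu> (\<beta> v w)) = (\<Sum>(v, w)\<leftarrow>ys. \<mu> (\<beta> v w))"
    by (rule tensor_eq_bilinear_functional[OF t eq lin_fun_comp[OF \<beta>1 \<mu>] lin_fun_comp[OF \<beta>2 \<mu>]])
  then show "\<mu> (\<Sum>(v, w)\<leftarrow>xs. \<beta> v w) = \<mu> (\<Sum>(v, w)\<leftarrow>ys. \<beta> v w)"
    using \<mu> unfolding lin_fun_def by (simp add: linear_map_sum_list)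
qed

lemma tensor3_eq_trilinear:
  assumes s: "vector_space s" and t: "vector_space t" and eq: "tensor3_eq r s t xs ys"
    and \<gamma>1: "\<And>v w. Vector_Spaces.linear r q (\<lambda>u. \<gamma> u v w)"
    and \<gamma>2: "\<And>u w. Vector_Spaces.linear s q (\<lambda>v. \<gamma> u v w)"
    and \<gamma>3: "\<And>u v. Vector_Spaces.linear t q (\<gamma> u v)"
  shows "(\<Sum>(u, v, w)\<leftarrow>xs. \<gamma> u v w) = (\<Sum>(u, v, w)\<leftarrow>ys. \<gamma> u v w)"
proof (rule eq_if_lin_fun_eq)
  show "vector_space q" using linear_vector_spaceD(2)[OF \<gamma>3] .
  fix \<mu> assume \<mu>: "lin_fun q \<mu>"
  have "(\<Sum>(u, v, w)\<leftarrow>xs. \<mu> (\<gamma> u v w)) = (\<Sum>(u, v, w)\<leftarrow>ys. \<mu> (\<gamma> u v w))"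
    by (rule tensor3_eq_trilinear_functional[OF s t eq lin_fun_comp[OF \<gamma>1 \<mu>]
          lin_fun_comp[OF \<gamma>2 \<mu>] lin_fun_comp[OF \<gamma>3 \<mu>]])
  then show "\<mu> (\<Sum>(u, v, w)\<leftarrow>xs. \<gamma> u v w) = \<mu> (\<Sum>(u, v, w)\<leftarrow>ys. \<gamma> u v w)"
    using \<mu> unfolding lin_fun_def by (simp add: linear_map_sum_list prod.case_distrib)
qed

lemma tensor_eq_sym: "tensor_eq s t xs ys \<Longrightarrow> tensor_eq s t ys xs"
  unfolding tensor_eq_def by metis

lemma tensor_eq_trans: "tensor_eq s t xs ys \<Longrightarrow> tensor_eq s t ys zs \<Longrightarrow> tensor_eq s t xs zs"
  unfolding tensor_eq_def by metis

lemma tensor_eq_map: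
  assumes f: "Vector_Spaces.linear s1 s2 f" and g: "Vector_Spaces.linear t1 t2 g"
    and eq: "tensor_eq s1 t1 xs ys"
  shows "tensor_eq s2 t2 (map (\<lambda>(a, b). (f a, g b)) xs) (map (\<lambda>(a, b). (f a, g b)) ys)"
  unfolding tensor_eq_def
proof (intro allI impI)
  fix F G assume "lin_fun s2 F \<and> lin_fun t2 G"
  then have "lin_fun s1 (\<lambda>x. F (f x))" "lin_fun t1 (\<lambda>x. G (g x))"
    using lin_fun_comp[OF f] lin_fun_comp[OF g] by blast+
  then show "(\<Sum>(v, w)\<leftarrow>map (\<lambda>(a, b). (f a, g b)) xs. F v * G w) =
             (\<Sum>(v, w)\<leftarrow>map (\<lambda>(a, b). (f a, g b)) ys. F v * G w)"
    using eq[unfolded tensor_eq_def, rule_format, of "\<lambda>x. F (f x)" "\<lambda>x. G (g x)"]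
    by (simp add: case_prod_beta' o_def)
qed

lemma tensor_eq_map_inj_cancel:
  assumes f: "Vector_Spaces.linear s1 s2 f" "inj f" and g: "Vector_Spaces.linear t1 t2 g" "inj g"
    and eq: "tensor_eq s2 t2 (map (\<lambda>(a, b). (f a, g b)) xs) (map (\<lambda>(a, b). (f a, g b)) ys)"
  shows "tensor_eq s1 t1 xs ys"
  unfolding tensor_eq_def
proof (intro allI impI)
  obtain f' where f': "Vector_Spaces.linear s2 s1 f'" "f' \<circ> f = id"
    using vector_space_pair.linear_injective_left_inverse[OF _ f] linear_vector_spaceD[OF f(1)]
    unfolding vector_space_pair_def by blast
  obtain g' where g': "Vector_Spaces.linear t2 t1 g'" "g' \<circ> g = id"
    using vector_space_pair.linear_injective_left_inverse[OF _ g] linear_vector_spaceD[OF g(1)]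
    unfolding vector_space_pair_def by blast
  fix F G assume "lin_fun s1 F \<and> lin_fun t1 G"
  then have "lin_fun s2 (\<lambda>x. F (f' x))" "lin_fun t2 (\<lambda>x. G (g' x))"
    using lin_fun_comp[OF f'(1)] lin_fun_comp[OF g'(1)] by blast+
  then have "(\<Sum>(v, w)\<leftarrow>map (\<lambda>(a, b). (f a, g b)) xs. F (f' v) * G (g' w)) =
             (\<Sum>(v, w)\<leftarrow>map (\<lambda>(a, b). (f a, g b)) ys. F (f' v) * G (g' w))"
    using eq unfolding tensor_eq_def by blast
  moreover have "f' (f x) = x" "g' (g y) = y" for x y
    using f'(2) g'(2) by (simp_all add: fun_eq_iff)
  ultimately show "(\<Sum>(v, w)\<leftarrow>xs. F v * G w) = (\<Sum>(v, w)\<leftarrow>ys. F v * G w)"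
    by (simp add: case_prod_beta' o_def)
qed

section \<open>Hopf algebras, convolution and the antipode\<close>

lemma
  assumes "hopf_algebra A"
  shows hopf_algebra_vector_space: "vector_space (scl A)"
    and hopf_algebra_scl_mult_left: "scl A c (x * y) = scl A c x * y"
    and hopf_algebra_scl_mult_right: "scl A c (x * y) = x * scl A c y"
    and hopf_algebra_coassoc: "tensor3_eq (scl A) (scl A) (scl A)
            (concat (map (\<lambda>(a, b). map (\<lambda>(a1, a2). (a1, a2, b)) (cmul A a)) (cmul A x)))
            (concat (map (\<lambda>(a, b). map (\<lambda>(b1, b2). (a, b1, b2)) (cmul A b)) (cmul A x)))"
    and hopf_algebra_counit_left: "(\<Sum>(a, b)\<leftarrow>cmul A x. scl A (cnt A a) b) = x"
    and hopf_algebra_counit_right: "(\<Sum>(a, b)\<leftarrow>cmul A x. scl A (cnt A b) a) = x"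
    and hopf_algebra_antipode_linear: "Vector_Spaces.linear (scl A) (scl A) (ant A)"
    and hopf_algebra_antipode_left: "(\<Sum>(a, b)\<leftarrow>cmul A x. ant A a * b) = scl A (cnt A x) 1"
    and hopf_algebra_antipode_right: "(\<Sum>(a, b)\<leftarrow>cmul A x. a * ant A b) = scl A (cnt A x) 1"
  using assms unfolding hopf_algebra_def Let_def by blast+

lemma
  assumes "hopf_map A B f"
  shows hopf_map_linear: "Vector_Spaces.linear (scl A) (scl B) f"
    and hopf_map_mult: "f (x * y) = f x * f y"
    and hopf_map_one: "f 1 = 1"
    and hopf_map_cmul:
      "tensor_eq (scl B) (scl B) (cmul B (f x)) (map (\<lambda>(a, b). (f a, f b)) (cmul A x))"
    and hopf_map_cnt: "cnt B (f x) = cnt A x"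
  using assms unfolding hopf_map_def by blast+

lemma linear_mult_left:
  "hopf_algebra A \<Longrightarrow> Vector_Spaces.linear (scl A) (scl A) (\<lambda>x. c * x)"
  by (intro linearI hopf_algebra_vector_space) (simp_all add: distrib_left hopf_algebra_scl_mult_right)

lemma linear_mult_right:
  "hopf_algebra A \<Longrightarrow> Vector_Spaces.linear (scl A) (scl A) (\<lambda>x. x * c)"
  by (intro linearI hopf_algebra_vector_space) (simp_all add: distrib_right hopf_algebra_scl_mult_left)

definition convolution ::
  "('k::field, 'a::ring_1) hopf_str \<Rightarrow> ('a \<Rightarrow> 'b::ring_1) \<Rightarrow> ('a \<Rightarrow> 'b) \<Rightarrow> 'a \<Rightarrow> 'b" where
  "convolution A \<phi> \<psi> x = (\<Sum>(a, b)\<leftarrow>cmul A x. \<phi> a * \<psi> b)"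

definition convolution_unit ::
  "('k::field, 'a::ring_1) hopf_str \<Rightarrow> ('k, 'b::ring_1) hopf_str \<Rightarrow> 'a \<Rightarrow> 'b" where
  "convolution_unit A B x = scl B (cnt A x) 1"

lemma sum_list_concat_map:
  "(\<Sum>p\<leftarrow>concat (map h xs). g p) = (\<Sum>x\<leftarrow>xs. \<Sum>p\<leftarrow>h x. g p)"
  by (induct xs) simp_all

lemma convolution_assoc:
  assumes A: "hopf_algebra A" and B: "hopf_algebra B"
    and \<phi>: "Vector_Spaces.linear (scl A) (scl B) \<phi>"
    and \<psi>: "Vector_Spaces.linear (scl A) (scl B) \<psi>"
    and \<chi>: "Vector_Spaces.linear (scl A) (scl B) \<chi>"
  shows "convolution A (convolution A \<phi> \<psi>) \<chi> = convolution A \<phi> (convolution A \<psi> \<chi>)"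
proof
  fix x
  have "convolution A (convolution A \<phi> \<psi>) \<chi> x =
      (\<Sum>(u, v, w)\<leftarrow>concat (map (\<lambda>(a, b). map (\<lambda>(a1, a2). (a1, a2, b)) (cmul A a)) (cmul A x)).
         \<phi> u * \<psi> v * \<chi> w)"
    unfolding convolution_def sum_list_concat_map
    by (simp add: case_prod_beta' o_def sum_list_mult_const)
  also have "\<dots> =
      (\<Sum>(u, v, w)\<leftarrow>concat (map (\<lambda>(a, b). map (\<lambda>(b1, b2). (a, b1, b2)) (cmul A b)) (cmul A x)).
         \<phi> u * \<psi> v * \<chi> w)"
  proof (rule tensor3_eq_trilinear[OF hopf_algebra_vector_space[OF A] hopf_algebra_vector_space[OF A]
        hopf_algebra_coassoc[OF A]])
    show "Vector_Spaces.linear (scl A) (scl B) (\<lambda>u. \<phi> u * \<psi> v * \<chi> w)" for v w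
      using linear_comp_apply[OF \<phi> linear_mult_right[OF B]] by (simp add: mult.assoc)
    show "Vector_Spaces.linear (scl A) (scl B) (\<lambda>v. \<phi> u * \<psi> v * \<chi> w)" for u w
      using linear_comp_apply[OF linear_comp_apply[OF \<psi> linear_mult_right[OF B]] linear_mult_left[OF B]]
      by (simp add: mult.assoc)
    show "Vector_Spaces.linear (scl A) (scl B) (\<lambda>w. \<phi> u * \<psi> v * \<chi> w)" for u v
      using linear_comp_apply[OF \<chi> linear_mult_left[OF B]] .
  qed
  also have "\<dots> = convolution A \<phi> (convolution A \<psi> \<chi>) x"
    unfolding convolution_def sum_list_concat_map
    by (simp add: case_prod_beta' o_def sum_list_const_mult mult.assoc)
  finally show "convolution A (convolution A \<phi> \<psi>) \<chi> x = convolution A \<phi> (convolution A \<psi> \<chi>) x" .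
qed

lemma convolution_unit_right:
  assumes A: "hopf_algebra A" and B: "hopf_algebra B"
    and \<phi>: "Vector_Spaces.linear (scl A) (scl B) \<phi>"
  shows "convolution A \<phi> (convolution_unit A B) = \<phi>"
proof
  fix x
  have "convolution A \<phi> (convolution_unit A B) x = (\<Sum>(a, b)\<leftarrow>cmul A x. \<phi> (scl A (cnt A b) a))"
    unfolding convolution_def convolution_unit_def
    by (simp add: hopf_algebra_scl_mult_right[OF B, symmetric] linear_map_scale[OF \<phi>])
  also have "\<dots> = \<phi> x"
    by (simp add: linear_map_sum_list[OF \<phi>, symmetric] hopf_algebra_counit_right[OF A])
  finally show "convolution A \<phi> (convolution_unit A B) x = \<phi> x" .
qed

lemma convolution_unit_left:
  assumes A: "hopf_algebra A" and B: "hopf_algebra B"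
    and \<phi>: "Vector_Spaces.linear (scl A) (scl B) \<phi>"
  shows "convolution A (convolution_unit A B) \<phi> = \<phi>"
proof
  fix x
  have "convolution A (convolution_unit A B) \<phi> x = (\<Sum>(a, b)\<leftarrow>cmul A x. \<phi> (scl A (cnt A a) b))"
    unfolding convolution_def convolution_unit_def
    by (simp add: hopf_algebra_scl_mult_left[OF B, symmetric] linear_map_scale[OF \<phi>])
  also have "\<dots> = \<phi> x"
    by (simp add: linear_map_sum_list[OF \<phi>, symmetric] hopf_algebra_counit_left[OF A])
  finally show "convolution A (convolution_unit A B) \<phi> x = \<phi> x" .
qed

lemma convolution_inverse_unique:
  assumes A: "hopf_algebra A" and B: "hopf_algebra B"
    and lin: "Vector_Spaces.linear (scl A) (scl B) u" "Vector_Spaces.linear (scl A) (scl B) f"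
      "Vector_Spaces.linear (scl A) (scl B) v"
    and left: "convolution A u f = convolution_unit A B"
    and right: "convolution A f v = convolution_unit A B"
  shows "u = v"
proof -
  have "u = convolution A u (convolution A f v)"
    unfolding right convolution_unit_right[OF A B lin(1)] ..
  also have "\<dots> = convolution A (convolution A u f) v"
    using convolution_assoc[OF A B lin] ..
  also have "\<dots> = v"
    unfolding left convolution_unit_left[OF A B lin(3)] ..
  finally show ?thesis .
qed

lemma hopf_map_convolution_antipode_right:
  assumes A: "hopf_algebra A" and f: "hopf_map A B f"
  shows "convolution A f (f \<circ> ant A) = convolution_unit A B"
proof
  fix x
  have "convolution A f (f \<circ> ant A) x = f (\<Sum>(a, b)\<leftarrow>cmul A x. a * ant A b)"
    unfolding convolution_def
    by (simp add: linear_map_sum_list[OF hopf_map_linear[OF f]] hopf_map_mult[OF f])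
  also have "\<dots> = convolution_unit A B x"
    unfolding hopf_algebra_antipode_right[OF A] convolution_unit_def
    by (simp add: linear_map_scale[OF hopf_map_linear[OF f]] hopf_map_one[OF f])
  finally show "convolution A f (f \<circ> ant A) x = convolution_unit A B x" .
qed

lemma hopf_map_convolution_antipode_left:
  assumes B: "hopf_algebra B" and f: "hopf_map A B f"
  shows "convolution A (ant B \<circ> f) f = convolution_unit A B"
proof
  fix x
  have "convolution A (ant B \<circ> f) f x = (\<Sum>(a, b)\<leftarrow>map (\<lambda>(a, b). (f a, f b)) (cmul A x). ant B a * b)"
    unfolding convolution_def by (simp add: case_prod_beta' o_def)
  also have "\<dots> = (\<Sum>(a, b)\<leftarrow>cmul B (f x). ant B a * b)"
    using hopf_algebra_vector_space[OF B] tensor_eq_sym[OF hopf_map_cmul[OF f]]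
  proof (rule tensor_eq_bilinear)
    show "Vector_Spaces.linear (scl B) (scl B) (\<lambda>a. ant B a * b)" for b
      by (rule linear_comp_apply[OF hopf_algebra_antipode_linear[OF B] linear_mult_right[OF B]])
    show "Vector_Spaces.linear (scl B) (scl B) (\<lambda>b. ant B a * b)" for a
      by (rule linear_mult_left[OF B])
  qed
  also have "\<dots> = convolution_unit A B x"
    unfolding hopf_algebra_antipode_left[OF B] convolution_unit_def hopf_map_cnt[OF f] ..
  finally show "convolution A (ant B \<circ> f) f x = convolution_unit A B x" .
qed

lemma hopf_map_antipode:
  assumes A: "hopf_algebra A" and B: "hopf_algebra B" and f: "hopf_map A B f"
  shows "ant B (f x) = f (ant A x)"
proof -
  have "ant B \<circ> f = f \<circ> ant A"
  proof (rule convolution_inverse_unique[OF A B _ hopf_map_linear[OF f]])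
    show "Vector_Spaces.linear (scl A) (scl B) (ant B \<circ> f)"
      using Vector_Spaces.linear_compose[OF hopf_map_linear[OF f] hopf_algebra_antipode_linear[OF B]] .
    show "Vector_Spaces.linear (scl A) (scl B) (f \<circ> ant A)"
      using Vector_Spaces.linear_compose[OF hopf_algebra_antipode_linear[OF A] hopf_map_linear[OF f]] .
  qed (rule hopf_map_convolution_antipode_left[OF B f], rule hopf_map_convolution_antipode_right[OF A f])
  then show ?thesis by (simp add: fun_eq_iff)
qed

section \<open>Hopf maps\<close>

lemma hopf_map_id: "hopf_algebra A \<Longrightarrow> hopf_map A A id"
  unfolding hopf_map_def tensor_eq_def
  by (simp add: Vector_Spaces.linear_iff hopf_algebra_vector_space case_prod_beta')

lemma hopf_map_comp:
  assumes f: "hopf_map A B f" and g: "hopf_map B C g"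
  shows "hopf_map A C (g \<circ> f)"
  unfolding hopf_map_def
proof (intro conjI allI)
  show "Vector_Spaces.linear (scl A) (scl C) (g \<circ> f)"
    by (rule Vector_Spaces.linear_compose[OF hopf_map_linear[OF f] hopf_map_linear[OF g]])
  show "tensor_eq (scl C) (scl C) (cmul C ((g \<circ> f) x))
      (map (\<lambda>(a, b). ((g \<circ> f) a, (g \<circ> f) b)) (cmul A x))" for x
    using tensor_eq_trans[OF hopf_map_cmul[OF g]
        tensor_eq_map[OF hopf_map_linear[OF g] hopf_map_linear[OF g] hopf_map_cmul[OF f]]]
    by (simp add: comp_def case_prod_beta')
qed (simp_all add: hopf_map_mult[OF f] hopf_map_mult[OF g] hopf_map_one[OF f] hopf_map_one[OF g]
       hopf_map_cnt[OF f] hopf_map_cnt[OF g])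

lemma hopf_map_of_comp_inj:
  assumes \<iota>: "hopf_map K A \<iota>" "inj \<iota>" and \<psi>: "hopf_map L A (\<iota> \<circ> \<phi>)"
    and L: "hopf_algebra L" and K: "hopf_algebra K"
  shows "hopf_map L K \<phi>"
proof -
  note \<iota>_eq = inj_eq[OF \<iota>(2), symmetric]
  have lin: "Vector_Spaces.linear (scl L) (scl K) \<phi>"
  proof (rule linearI[OF hopf_algebra_vector_space[OF L] hopf_algebra_vector_space[OF K]])
    show "\<phi> (x + y) = \<phi> x + \<phi> y" for x y
      using linear_map_add[OF hopf_map_linear[OF \<psi>]] linear_map_add[OF hopf_map_linear[OF \<iota>(1)]]
      by (simp add: \<iota>_eq)
    show "\<phi> (scl L c x) = scl K c (\<phi> x)" for c x
      using linear_map_scale[OF hopf_map_linear[OF \<psi>]] linear_map_scale[OF hopf_map_linear[OF \<iota>(1)]]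
      by (simp add: \<iota>_eq)
  qed
  show ?thesis
    unfolding hopf_map_def
  proof (intro conjI allI lin)
    show "tensor_eq (scl K) (scl K) (cmul K (\<phi> x)) (map (\<lambda>(a, b). (\<phi> a, \<phi> b)) (cmul L x))" for x
    proof (rule tensor_eq_map_inj_cancel[OF hopf_map_linear[OF \<iota>(1)] \<iota>(2)
          hopf_map_linear[OF \<iota>(1)] \<iota>(2)])
      show "tensor_eq (scl A) (scl A) (map (\<lambda>(a, b). (\<iota> a, \<iota> b)) (cmul K (\<phi> x)))
          (map (\<lambda>(a, b). (\<iota> a, \<iota> b)) (map (\<lambda>(a, b). (\<phi> a, \<phi> b)) (cmul L x)))"
        using tensor_eq_trans[OF tensor_eq_sym[OF hopf_map_cmul[OF \<iota>(1), of "\<phi> x"]]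
            hopf_map_cmul[OF \<psi>, of x, simplified]]
        by (simp add: comp_def case_prod_beta')
    qed
  qed (use hopf_map_mult[OF \<psi>] hopf_map_mult[OF \<iota>(1)] hopf_map_one[OF \<psi>] hopf_map_one[OF \<iota>(1)]
      hopf_map_cnt[OF \<psi>] hopf_map_cnt[OF \<iota>(1)] in \<open>simp_all add: \<iota>_eq\<close>)
qed

lemma hopf_map_of_comp_surj:
  assumes \<pi>: "hopf_map A H \<pi>" "surj \<pi>" and \<psi>: "hopf_map A H' (\<phi> \<circ> \<pi>)"
    and H: "hopf_algebra H" and H': "hopf_algebra H'"
  shows "hopf_map H H' \<phi>"
proof -
  have lift: "\<exists>a. h = \<pi> a" for h using \<pi>(2) unfolding surj_def by blast
  have lin: "Vector_Spaces.linear (scl H) (scl H') \<phi>"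
  proof (rule linearI[OF hopf_algebra_vector_space[OF H] hopf_algebra_vector_space[OF H']])
    show "\<phi> (x + y) = \<phi> x + \<phi> y" for x y
      using lift linear_map_add[OF hopf_map_linear[OF \<psi>]] linear_map_add[OF hopf_map_linear[OF \<pi>(1)]]
      by (metis comp_apply)
    show "\<phi> (scl H c x) = scl H' c (\<phi> x)" for c x
      using lift linear_map_scale[OF hopf_map_linear[OF \<psi>]] linear_map_scale[OF hopf_map_linear[OF \<pi>(1)]]
      by (metis comp_apply)
  qed
  show ?thesis
    unfolding hopf_map_def
  proof (intro conjI allI lin)
    show "tensor_eq (scl H') (scl H') (cmul H' (\<phi> h)) (map (\<lambda>(a, b). (\<phi> a, \<phi> b)) (cmul H h))" for h
    proof -
      obtain a where a: "h = \<pi> a" using lift by blast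
      have "tensor_eq (scl H') (scl H') (cmul H' (\<phi> (\<pi> a)))
          (map (\<lambda>(a, b). (\<phi> a, \<phi> b)) (map (\<lambda>(a, b). (\<pi> a, \<pi> b)) (cmul A a)))"
        using hopf_map_cmul[OF \<psi>, of a] by (simp add: comp_def case_prod_beta')
      then show ?thesis
        unfolding a
        by (rule tensor_eq_trans[OF _ tensor_eq_map[OF lin lin tensor_eq_sym[OF hopf_map_cmul[OF \<pi>(1)]]]])
    qed
    show "\<phi> (x * y) = \<phi> x * \<phi> y" for x y
      using lift hopf_map_mult[OF \<psi>] hopf_map_mult[OF \<pi>(1)] by (metis comp_apply)
    show "\<phi> 1 = 1" using hopf_map_one[OF \<psi>] hopf_map_one[OF \<pi>(1)] by simp
    show "cnt H' (\<phi> x) = cnt H x" for x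
      using lift hopf_map_cnt[OF \<psi>] hopf_map_cnt[OF \<pi>(1)] by (metis comp_apply)
  qed
qed

lemma hopf_iso_inv:
  assumes A: "hopf_algebra A" and B: "hopf_algebra B" and f: "hopf_iso A B f"
  shows "hopf_iso B A (inv f)"
proof -
  have f_map: "hopf_map A B f" and f_bij: "bij f" using f unfolding hopf_iso_def by auto
  have "f \<circ> inv f = id" using f_bij by (metis bij_is_surj surj_iff)
  then have "hopf_map B A (inv f)"
    using hopf_map_of_comp_inj[OF f_map bij_is_inj[OF f_bij] _ B A] hopf_map_id[OF B] by simp
  then show ?thesis unfolding hopf_iso_def using bij_imp_bij_inv[OF f_bij] by blast
qed

section \<open>The Hopf centre\<close>

lemma hopf_subalgebra_image:
  assumes A: "hopf_algebra A" and B: "hopf_algebra B" and f: "hopf_map A B f"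
    and C: "hopf_subalgebra A C"
  shows "hopf_subalgebra B (f ` C)"
proof -
  note lin = hopf_map_linear[OF f]
  have cmul: "\<exists>ys. set ys \<subseteq> f ` C \<times> f ` C \<and> tensor_eq (scl B) (scl B) (cmul B (f x)) ys"
    if "x \<in> C" for x
  proof -
    obtain xs where xs: "set xs \<subseteq> C \<times> C" "tensor_eq (scl A) (scl A) (cmul A x) xs"
      using C \<open>x \<in> C\<close> unfolding hopf_subalgebra_def by blast
    have "tensor_eq (scl B) (scl B) (cmul B (f x)) (map (\<lambda>(a, b). (f a, f b)) xs)"
      by (rule tensor_eq_trans[OF hopf_map_cmul[OF f] tensor_eq_map[OF lin lin xs(2)]])
    moreover have "set (map (\<lambda>(a, b). (f a, f b)) xs) \<subseteq> f ` C \<times> f ` C" using xs(1) by auto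
    ultimately show ?thesis by blast
  qed
  show ?thesis
    using C cmul unfolding hopf_subalgebra_def Ball_image_comp comp_def
    by (simp add: linear_map_zero[OF lin, symmetric] hopf_map_one[OF f, symmetric]
        linear_map_add[OF lin, symmetric] linear_map_scale[OF lin, symmetric]
        hopf_map_mult[OF f, symmetric] hopf_map_antipode[OF A B f])
qed

lemma central_hopf_subalgebra_image:
  assumes A: "hopf_algebra A" and B: "hopf_algebra B" and f: "hopf_map A B f" "surj f"
    and C: "central_hopf_subalgebra A C"
  shows "central_hopf_subalgebra B (f ` C)"
proof -
  have "a * f c = f c * a" if "c \<in> C" for a c
  proof -
    obtain a' where a': "a = f a'" using surjD[OF f(2)] by blast
    have "a' * c = c * a'" using C \<open>c \<in> C\<close> unfolding central_hopf_subalgebra_def by blast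
    then show ?thesis unfolding a' hopf_map_mult[OF f(1), symmetric] by simp
  qed
  then show ?thesis
    using hopf_subalgebra_image[OF A B f(1)] C unfolding central_hopf_subalgebra_def by blast
qed

lemma hopf_iso_image_hopf_center_subset:
  assumes A: "hopf_algebra A" and B: "hopf_algebra B" and f: "hopf_iso A B f"
    and Z: "is_hopf_center A Z" and Z': "is_hopf_center B Z'"
  shows "f ` Z \<subseteq> Z'"
proof -
  have "central_hopf_subalgebra B (f ` Z)"
    using central_hopf_subalgebra_image[OF A B] f Z
    unfolding hopf_iso_def is_hopf_center_def by (simp add: bij_is_surj)
  then show ?thesis using Z' unfolding is_hopf_center_def by blast
qed

lemma hopf_center_image:
  assumes A: "hopf_algebra A" and B: "hopf_algebra B" and f: "hopf_iso A B f"
    and Z: "is_hopf_center A Z" and Z': "is_hopf_center B Z'"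
  shows "f ` Z = Z'"
proof
  show "f ` Z \<subseteq> Z'" by (rule hopf_iso_image_hopf_center_subset[OF A B f Z Z'])
  have "inv f ` Z' \<subseteq> Z"
    by (rule hopf_iso_image_hopf_center_subset[OF B A hopf_iso_inv[OF A B f] Z' Z])
  then have "f ` inv f ` Z' \<subseteq> f ` Z" by (rule image_mono)
  then show "Z' \<subseteq> f ` Z"
    using f unfolding hopf_iso_def by (simp add: bij_is_surj image_f_inv_f)
qed

section \<open>Exact sequences\<close>

lemma
  assumes "hopf_exact K A H \<iota> \<pi>"
  shows hopf_exact_hopf_algebras: "hopf_algebra K" "hopf_algebra A" "hopf_algebra H"
    and hopf_exact_hopf_maps: "hopf_map K A \<iota>" "hopf_map A H \<pi>"
    and hopf_exact_inj: "inj \<iota>"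
    and hopf_exact_surj: "surj \<pi>"
    and hopf_exact_kernel: "{a. \<pi> a = 0} = aug_ideal A (range \<iota>)"
  using assms unfolding hopf_exact_def by blast+

lemma aug_ideal_image:
  assumes w: "hopf_map A A' w" and sub: "w ` B \<subseteq> B'"
  shows "w ` aug_ideal A B \<subseteq> aug_ideal A' B'"
proof
  fix y assume "y \<in> w ` aug_ideal A B"
  then obtain xs where y: "y = w (\<Sum>(a, b)\<leftarrow>xs. a * b)"
    and xs: "\<forall>(a, b)\<in>set xs. b \<in> B \<and> cnt A b = 0"
    unfolding aug_ideal_def by blast
  have "y = (\<Sum>(a, b)\<leftarrow>map (\<lambda>(a, b). (w a, w b)) xs. a * b)"
    unfolding y linear_map_sum_list[OF hopf_map_linear[OF w]] hopf_map_mult[OF w]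
    by (simp add: case_prod_beta' o_def)
  moreover have "\<forall>(a, b)\<in>set (map (\<lambda>(a, b). (w a, w b)) xs). b \<in> B' \<and> cnt A' b = 0"
    using xs sub by (fastforce simp: hopf_map_cnt[OF w])
  ultimately show "y \<in> aug_ideal A' B'" unfolding aug_ideal_def by blast
qed

lemma hopf_exact_fiber_image:
  assumes ex: "hopf_exact K A H \<iota> \<pi>" and ex': "hopf_exact K' A' H' \<iota>' \<pi>'"
    and w: "hopf_map A A' w" and sub: "w ` range \<iota> \<subseteq> range \<iota>'"
    and eq: "\<pi> a = \<pi> b"
  shows "\<pi>' (w a) = \<pi>' (w b)"
proof -
  note lin_\<pi> = hopf_map_linear[OF hopf_exact_hopf_maps(2)[OF ex]]
    and lin_\<pi>' = hopf_map_linear[OF hopf_exact_hopf_maps(2)[OF ex']]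
    and lin_w = hopf_map_linear[OF w]
  have "a - b \<in> aug_ideal A (range \<iota>)"
    using eq hopf_exact_kernel[OF ex] linear_map_diff[OF lin_\<pi>] by auto
  then have "w (a - b) \<in> aug_ideal A' (range \<iota>')" using aug_ideal_image[OF w sub] by blast
  then have "\<pi>' (w (a - b)) = 0" using hopf_exact_kernel[OF ex'] by blast
  then show ?thesis by (simp add: linear_map_diff[OF lin_w] linear_map_diff[OF lin_\<pi>'])
qed

lemma hopf_exact_kernel_map:
  assumes ex: "hopf_exact K A H \<iota> \<pi>" and ex': "hopf_exact K' A' H' \<iota>' \<pi>'"
    and w: "hopf_map A A' w" and sub: "w ` range \<iota> \<subseteq> range \<iota>'"
  shows "\<exists>\<psi>. hopf_map K K' \<psi> \<and> \<iota>' \<circ> \<psi> = w \<circ> \<iota>"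
proof -
  define \<psi> where "\<psi> = inv \<iota>' \<circ> w \<circ> \<iota>"
  have comm: "\<iota>' \<circ> \<psi> = w \<circ> \<iota>"
    using sub unfolding \<psi>_def fun_eq_iff comp_apply by (blast intro: f_inv_into_f)
  have "hopf_map K K' \<psi>"
    using hopf_map_of_comp_inj[where \<phi>=\<psi>, OF hopf_exact_hopf_maps(1)[OF ex'] hopf_exact_inj[OF ex'] _
        hopf_exact_hopf_algebras(1)[OF ex] hopf_exact_hopf_algebras(1)[OF ex']]
      hopf_map_comp[OF hopf_exact_hopf_maps(1)[OF ex] w]
    unfolding comm .
  with comm show ?thesis by blast
qed

lemma hopf_exact_quotient_map:
  assumes ex: "hopf_exact K A H \<iota> \<pi>" and ex': "hopf_exact K' A' H' \<iota>' \<pi>'"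
    and w: "hopf_map A A' w" and sub: "w ` range \<iota> \<subseteq> range \<iota>'"
  shows "\<exists>\<phi>. hopf_map H H' \<phi> \<and> \<phi> \<circ> \<pi> = \<pi>' \<circ> w"
proof -
  define \<phi> where "\<phi> = \<pi>' \<circ> w \<circ> inv \<pi>"
  have comm: "\<phi> \<circ> \<pi> = \<pi>' \<circ> w"
    unfolding \<phi>_def fun_eq_iff comp_apply
    by (intro allI hopf_exact_fiber_image[OF ex ex' w sub])
      (simp add: surj_f_inv_f[OF hopf_exact_surj[OF ex]])
  have "hopf_map H H' \<phi>"
    using hopf_map_of_comp_surj[where \<phi>=\<phi>, OF hopf_exact_hopf_maps(2)[OF ex] hopf_exact_surj[OF ex] _
        hopf_exact_hopf_algebras(3)[OF ex] hopf_exact_hopf_algebras(3)[OF ex']]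
      hopf_map_comp[OF w hopf_exact_hopf_maps(2)[OF ex']]
    unfolding comm .
  with comm show ?thesis by blast
qed

lemma hopf_exact_kernel_iso:
  assumes ex: "hopf_exact K A H \<iota> \<pi>" and ex': "hopf_exact K' A' H' \<iota>' \<pi>'"
    and w: "hopf_iso A A' w" and im: "w ` range \<iota> = range \<iota>'"
  shows "\<exists>\<psi>. hopf_iso K K' \<psi> \<and> \<iota>' \<circ> \<psi> = w \<circ> \<iota>"
proof -
  have w_map: "hopf_map A A' w" and w_bij: "bij w" using w unfolding hopf_iso_def by auto
  have w'_map: "hopf_map A' A (inv w)"
    using hopf_iso_inv[OF hopf_exact_hopf_algebras(2)[OF ex] hopf_exact_hopf_algebras(2)[OF ex'] w]
    unfolding hopf_iso_def by blast
  have im': "inv w ` range \<iota>' = range \<iota>"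
    using im image_inv_f_f[OF bij_is_inj[OF w_bij]] by metis
  obtain \<psi> where \<psi>: "hopf_map K K' \<psi>" "\<iota>' \<circ> \<psi> = w \<circ> \<iota>"
    using hopf_exact_kernel_map[OF ex ex' w_map] im by blast
  obtain \<psi>' where \<psi>': "hopf_map K' K \<psi>'" "\<iota> \<circ> \<psi>' = inv w \<circ> \<iota>'"
    using hopf_exact_kernel_map[OF ex' ex w'_map] im' by blast
  have "\<iota> (\<psi>' (\<psi> k)) = \<iota> k" for k
    using fun_cong[OF \<psi>(2), of k] fun_cong[OF \<psi>'(2), of "\<psi> k"] bij_is_inj[OF w_bij] by simp
  then have "\<psi>' \<circ> \<psi> = id" using hopf_exact_inj[OF ex] by (simp add: fun_eq_iff inj_eq)
  moreover have "\<iota>' (\<psi> (\<psi>' k)) = \<iota>' k" for k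
    using fun_cong[OF \<psi>(2), of "\<psi>' k"] fun_cong[OF \<psi>'(2), of k] w_bij
    by (simp add: bij_is_surj surj_f_inv_f)
  then have "\<psi> \<circ> \<psi>' = id" using hopf_exact_inj[OF ex'] by (simp add: fun_eq_iff inj_eq)
  ultimately show ?thesis using \<psi> o_bij unfolding hopf_iso_def by blast
qed

lemma hopf_exact_quotient_iso:
  assumes ex: "hopf_exact K A H \<iota> \<pi>" and ex': "hopf_exact K' A' H' \<iota>' \<pi>'"
    and w: "hopf_iso A A' w" and im: "w ` range \<iota> = range \<iota>'"
  shows "\<exists>\<phi>. hopf_iso H H' \<phi> \<and> \<pi>' \<circ> w = \<phi> \<circ> \<pi>"
proof -
  have w_map: "hopf_map A A' w" and w_bij: "bij w" using w unfolding hopf_iso_def by auto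
  have w'_map: "hopf_map A' A (inv w)"
    using hopf_iso_inv[OF hopf_exact_hopf_algebras(2)[OF ex] hopf_exact_hopf_algebras(2)[OF ex'] w]
    unfolding hopf_iso_def by blast
  have im': "inv w ` range \<iota>' = range \<iota>"
    using im image_inv_f_f[OF bij_is_inj[OF w_bij]] by metis
  obtain \<phi> where \<phi>: "hopf_map H H' \<phi>" "\<phi> \<circ> \<pi> = \<pi>' \<circ> w"
    using hopf_exact_quotient_map[OF ex ex' w_map] im by blast
  obtain \<phi>' where \<phi>': "hopf_map H' H \<phi>'" "\<phi>' \<circ> \<pi>' = \<pi> \<circ> inv w"
    using hopf_exact_quotient_map[OF ex' ex w'_map] im' by blast
  have "\<phi>' (\<phi> (\<pi> a)) = \<pi> a" for a
    using fun_cong[OF \<phi>(2), of a] fun_cong[OF \<phi>'(2), of "w a"] bij_is_inj[OF w_bij] by simp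
  then have "\<phi>' \<circ> \<phi> = id" using hopf_exact_surj[OF ex] by (metis comp_apply eq_id_iff surjD)
  moreover have "\<phi> (\<phi>' (\<pi>' a)) = \<pi>' a" for a
    using fun_cong[OF \<phi>(2), of "inv w a"] fun_cong[OF \<phi>'(2), of a] w_bij
    by (simp add: bij_is_surj surj_f_inv_f)
  then have "\<phi> \<circ> \<phi>' = id" using hopf_exact_surj[OF ex'] by (metis comp_apply eq_id_iff surjD)
  ultimately show ?thesis using \<phi> o_bij unfolding hopf_iso_def by metis
qed

theorem proposition2p10:
  fixes K1 :: "('k::field, 'k1::ring_1) hopf_str" and A1 :: "('k, 'a1::ring_1) hopf_str"
    and H1 :: "('k, 'h1::ring_1) hopf_str"
    and K2 :: "('k, 'k2::ring_1) hopf_str" and A2 :: "('k, 'a2::ring_1) hopf_str"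
    and H2 :: "('k, 'h2::ring_1) hopf_str"
    and \<iota>1 :: "'k1 \<Rightarrow> 'a1" and \<pi>1 :: "'a1 \<Rightarrow> 'h1"
    and \<iota>2 :: "'k2 \<Rightarrow> 'a2" and \<pi>2 :: "'a2 \<Rightarrow> 'h2"
    and \<omega> :: "'a1 \<Rightarrow> 'a2"
  assumes ex1: "hopf_exact K1 A1 H1 \<iota>1 \<pi>1"
    and ex2: "hopf_exact K2 A2 H2 \<iota>2 \<pi>2"
    and c1: "is_hopf_center A1 (range \<iota>1)"
    and c2: "is_hopf_center A2 (range \<iota>2)"
    and iso: "hopf_iso A1 A2 \<omega>"
  shows "\<exists>\<omega>u \<omega>o. hopf_iso K1 K2 \<omega>u \<and> hopf_iso H1 H2 \<omega>o \<and>
           \<iota>2 \<circ> \<omega>u = \<omega> \<circ> \<iota>1 \<and> \<pi>2 \<circ> \<omega> = \<omega>o \<circ> \<pi>1"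
proof -
  have center: "\<omega> ` range \<iota>1 = range \<iota>2"
    using hopf_center_image[OF hopf_exact_hopf_algebras(2)[OF ex1] hopf_exact_hopf_algebras(2)[OF ex2]
        iso c1 c2] .
  obtain \<omega>u where "hopf_iso K1 K2 \<omega>u" "\<iota>2 \<circ> \<omega>u = \<omega> \<circ> \<iota>1"
    using hopf_exact_kernel_iso[OF ex1 ex2 iso center] by blast
  moreover obtain \<omega>o where "hopf_iso H1 H2 \<omega>o" "\<pi>2 \<circ> \<omega> = \<omega>o \<circ> \<pi>1"
    using hopf_exact_quotient_iso[OF ex1 ex2 iso center] by blast
  ultimately show ?thesis by blast
qed

end
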